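(* Let $r\in\mathbb{R}$. For all integers $n \geq m \geq 0$, \[ S_2(n,m) = \sum_{l=0}^m \binom{n}{l} (-1)^l r^l S_{2,r}(n-l,m-l). \]
   Context: $S_2(n,k)$ denotes the Stirling numbers of the second kind, given by $\frac{1}{k!}(e^t-1)^k = \sum_{n\ge k} S_2(n,k)\frac{t^n}{n!}$. For $r\in\mathbb{R}$ and integer $k\ge 0$, the extended Stirling numbers of the second kind $S_{2,r}(n,k)$ are defined by \[ \frac{1}{k!}(e^t-1+rt)^k = \sum_{n=k}^\infty S_{2,r}(n,k)\frac{t^n}{n!}, \] with $S_{2,r}(a,b)=0$ whenever $a<b$. *)

theory Defs
  imports "HOL-Combinatorics.Stirling" "HOL-Computational_Algebra.Formal_Power_Series"
begin

definition ext_Stirling2 :: "real \<Rightarrow> nat \<Rightarrow> nat \<Rightarrow> real" where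
  "ext_Stirling2 r n k =
     fact n * fps_nth (fps_const (1 / fact k) * (fps_exp 1 - 1 + fps_const r * fps_X) ^ k) n"

end

theory Submission
  imports Defs
begin

text \<open>Since \<open>e\<^sup>t - 1 = (e\<^sup>t - 1 + r t) - r t\<close>, expanding the \<open>m\<close>-th power binomially
  expresses the generating function of \<open>S\<^sub>2(\<cdot>, m)\<close> through those of \<open>S\<^sub>2\<^sub>,\<^sub>r(\<cdot>, m - l)\<close>;
  the factor \<open>t\<^sup>l\<close> shifts the coefficient index by \<open>l\<close>, which together with the factorial
  normalisations produces \<open>(n choose l)\<close>.\<close>

lemma fps_deriv_fps_exp_minus_one_power:
  fixes k :: nat
  defines "E \<equiv> fps_exp (1::'a::field_char_0) - 1"
  shows "fps_deriv (fps_const (1 / fact (Suc k)) * E ^ Suc k)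
    = fps_const (of_nat (Suc k)) * (fps_const (1 / fact (Suc k)) * E ^ Suc k)
      + fps_const (1 / fact k) * E ^ k"
proof -
  have "fps_deriv E = E + 1"
    unfolding E_def by simp
  then have deriv_power: "fps_deriv (E ^ Suc k) = fps_const (of_nat (Suc k)) * E ^ k * (E + 1)"
    using fps_deriv_power[of E "Suc k"] by (simp add: mult_ac del: power_Suc)
  have "fps_deriv (fps_const (1 / fact (Suc k)) * E ^ Suc k)
      = fps_const (of_nat (Suc k)) * (fps_const (1 / fact (Suc k)) * E ^ Suc k)
        + fps_const ((1 / fact (Suc k)) * of_nat (Suc k)) * E ^ k"
    by (simp only: fps_deriv_mult_const_left deriv_power fps_const_mult) (simp add: algebra_simps)
  moreover have "(1 / fact (Suc k)) * of_nat (Suc k) = (1 / fact k :: 'a)"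
    by (simp add: divide_simps del: of_nat_Suc)
  ultimately show ?thesis
    by simp
qed

lemma Stirling_egf:
  "of_nat (Stirling n m)
    = fact n * fps_nth (fps_const (1 / fact m) * (fps_exp 1 - 1) ^ m :: 'a::field_char_0 fps) n"
proof (induction n arbitrary: m)
  case 0
  then show ?case by (cases m) auto
next
  case (Suc n)
  show ?case
  proof (cases m)
    case 0
    then show ?thesis by simp
  next
    case (Suc k)
    define F :: "nat \<Rightarrow> 'a fps" where "F j = fps_const (1 / fact j) * (fps_exp 1 - 1) ^ j" for j
    have "fact (Suc n) * fps_nth (F (Suc k)) (Suc n) = fact n * fps_nth (fps_deriv (F (Suc k))) n"
      by (simp add: fps_deriv_nth algebra_simps)
    also have "\<dots> = of_nat (Suc k) * (fact n * fps_nth (F (Suc k)) n) + fact n * fps_nth (F k) n"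
      unfolding F_def
      by (simp only: fps_deriv_fps_exp_minus_one_power fps_add_nth fps_mult_left_const_nth)
        (simp add: algebra_simps)
    also have "\<dots> = of_nat (Stirling (Suc n) m)"
    proof -
      have "fact n * fps_nth (F j) n = of_nat (Stirling n j)" for j
        using Suc.IH[of j] by (simp only: F_def)
      then show ?thesis
        by (simp add: \<open>m = Suc k\<close> algebra_simps)
    qed
    finally show ?thesis
      by (simp add: F_def \<open>m = Suc k\<close>)
  qed
qed

lemma egf_coeff_power_add_monomial:
  fixes A :: "'a::field_char_0 fps"
  shows "fact n * fps_nth (fps_const (1 / fact m) * (fps_const c * fps_X + A) ^ m) n
    = (\<Sum>l\<le>m. of_nat (n choose l) * c ^ l
         * (fact (n - l) * fps_nth (fps_const (1 / fact (m - l)) * A ^ (m - l)) (n - l)))"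
proof -
  have "fps_nth (fps_const (1 / fact m) * (fps_const c * fps_X + A) ^ m) n
      = (\<Sum>l\<le>m. (1 / fact m) * of_nat (m choose l) * c ^ l * fps_nth (fps_X ^ l * A ^ (m - l)) n)"
    by (simp add: binomial_ring power_mult_distrib fps_const_power fps_sum_nth
        sum_distrib_left mult.assoc)
  moreover have "fact n * ((1 / fact m) * of_nat (m choose l) * c ^ l * fps_nth (fps_X ^ l * A ^ (m - l)) n)
      = of_nat (n choose l) * c ^ l
          * (fact (n - l) * fps_nth (fps_const (1 / fact (m - l)) * A ^ (m - l)) (n - l))"
    if "l \<le> m" for l
    using that by (cases "l \<le> n") (simp_all add: fps_X_power_mult_nth binomial_fact field_simps)
  ultimately show ?thesis
    by (simp add: sum_distrib_left)
qed

theorem theorem3: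
  fixes r :: real and n m :: nat
  assumes "m \<le> n"
  shows "real (Stirling n m) =
    (\<Sum>l=0..m. real (n choose l) * (-1) ^ l * r ^ l * ext_Stirling2 r (n - l) (m - l))"
proof -
  define A :: "real fps" where "A = fps_exp 1 - 1 + fps_const r * fps_X"
  have split: "fps_exp 1 - 1 = fps_const (- r) * fps_X + A"
    by (simp add: A_def algebra_simps flip: fps_const_neg)
  have "real (Stirling n m) = fact n * fps_nth (fps_const (1 / fact m) * (fps_const (- r) * fps_X + A) ^ m) n"
    unfolding split [symmetric] by (rule Stirling_egf)
  also have "\<dots> = (\<Sum>l\<le>m. real (n choose l) * (- r) ^ l * ext_Stirling2 r (n - l) (m - l))"
    unfolding egf_coeff_power_add_monomial ext_Stirling2_def A_def ..
  finally show ?thesis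
    by (simp add: atLeast0AtMost power_minus' mult.assoc)
qed

end
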